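(* Let $f_1,f_2$ be the circle rotations by angles $\alpha,\beta\in\mathbb{R}\setminus\mathbb{Q}$ respectively, with $\beta-\alpha\in\mathbb{Q}$. Let $\mathscr{F}=\{f_1,f_2\}$ and $\Phi=\tau\ltimes\mathscr{F}$ on $\Sigma_2\times\mathbb{S}^1$. Then (1) $\mathscr{F}$ is minimal; (2) $\mathbb{S}^1$ is not a strict attractor of $\mathscr{F}$; (3) the strong unstable foliation $\mathcal{F}^{uu}(\Phi)$ is not minimal.
   Context: $\mathbb{S}^1=\mathbb{R}/\mathbb{Z}$. $\mathscr{F}$ is minimal if $\{h(x):h\in\langle\mathscr{F}\rangle^+\}$ is dense for every $x$ ($\langle\mathscr{F}\rangle^+$ = semigroup of finite compositions). $\mathbb{S}^1$ is a strict attractor of $\mathscr{F}$ if $F^n(S)\to\mathbb{S}^1$ in the Hausdorff metric for every nonempty compact $S$, where $F(A)=f_1(A)\cup f_2(A)$. $\Sigma_2=\{1,2\}^{\mathbb{Z}}$ with metric $\nu^m$, $m=\min\{i\geq0:\omega_i\ne\omega'_i\text{ or }\omega_{-i}\ne\omega'_{-i}\}$, $0<\nu<1$; $\tau$ the shift; $\Phi(\omega,x)=(\tau\omega,f_{\omega_0}(x))$. $W^u_{loc}(\omega)=\{\omega':\omega'_i=\omega_i\ \forall i<0\}$, $W^{uu}(\omega,x)=\bigcup_{n\geq0}\Phi^n(W^u_{loc}(\tau^{-n}\omega)\times\{\pi(\Phi^{-n}(\omega,x))\})$ with $\pi$ the projection to $\mathbb{S}^1$; $\mathcal{F}^{uu}(\Phi)$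 is minimal if every such leaf is dense in $\Sigma_2\times\mathbb{S}^1$. *)

theory Defs
  imports "HOL-Analysis.Analysis"
begin

text \<open>The circle S^1 = R/Z is modelled as the unit circle in the complex plane
  (via t mod 1 maps to exp(2 pi i t)); the rotation by angle a becomes
  multiplication by cis (2 pi a).\<close>

definition S1 :: "complex set" where
  "S1 = sphere 0 1"

definition circ_rot :: "real \<Rightarrow> complex \<Rightarrow> complex" where
  "circ_rot a z = cis (2 * pi * a) * z"

inductive_set semigrp :: "('a \<Rightarrow> 'a) set \<Rightarrow> ('a \<Rightarrow> 'a) set" for F where
  gen: "f \<in> F \<Longrightarrow> f \<in> semigrp F"
| comp: "g \<in> semigrp F \<Longrightarrow> f \<in> F \<Longrightarrow> f \<circ> g \<in> semigrp F"

definition ifs_minimal :: "(complex \<Rightarrow> complex) set \<Rightarrow> bool" where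
  "ifs_minimal F \<longleftrightarrow> (\<forall>x\<in>S1. S1 \<subseteq> closure {h x | h. h \<in> semigrp F})"

definition hausdorff_dist :: "'a::metric_space set \<Rightarrow> 'a set \<Rightarrow> real" where
  "hausdorff_dist A B = max (SUP a\<in>A. infdist a B) (SUP b\<in>B. infdist b A)"

definition Fimg :: "('a \<Rightarrow> 'a) set \<Rightarrow> 'a set \<Rightarrow> 'a set" where
  "Fimg F A = (\<Union>f\<in>F. f ` A)"

definition strict_attractor :: "(complex \<Rightarrow> complex) set \<Rightarrow> bool" where
  "strict_attractor F \<longleftrightarrow>
     (\<forall>S. S \<noteq> {} \<and> compact S \<and> S \<subseteq> S1 \<longrightarrow>
        (\<lambda>n. hausdorff_dist ((Fimg F ^^ n) S) S1) \<longlonglongrightarrow> 0)"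

definition Sigma2 :: "(int \<Rightarrow> nat) set" where
  "Sigma2 = {\<omega>. \<forall>i. \<omega> i \<in> {1, 2}}"

definition sigma_dist :: "real \<Rightarrow> (int \<Rightarrow> nat) \<Rightarrow> (int \<Rightarrow> nat) \<Rightarrow> real" where
  "sigma_dist \<nu> \<omega> \<omega>' =
     (if \<omega> = \<omega>' then 0
      else \<nu> ^ (LEAST m::nat. \<omega> (int m) \<noteq> \<omega>' (int m) \<or> \<omega> (- int m) \<noteq> \<omega>' (- int m)))"

definition shift :: "(int \<Rightarrow> nat) \<Rightarrow> (int \<Rightarrow> nat)" where
  "shift \<omega> = (\<lambda>i. \<omega> (i + 1))"

definition shift_inv :: "(int \<Rightarrow> nat) \<Rightarrow> (int \<Rightarrow> nat)" where
  "shift_inv \<omega> = (\<lambda>i. \<omega> (i - 1))"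

definition skew :: "(nat \<Rightarrow> complex \<Rightarrow> complex) \<Rightarrow> (int \<Rightarrow> nat) \<times> complex \<Rightarrow> (int \<Rightarrow> nat) \<times> complex" where
  "skew f p = (shift (fst p), f (fst p 0) (snd p))"

definition skew_inv :: "(nat \<Rightarrow> complex \<Rightarrow> complex) \<Rightarrow> (int \<Rightarrow> nat) \<times> complex \<Rightarrow> (int \<Rightarrow> nat) \<times> complex" where
  "skew_inv f p = (shift_inv (fst p), inv_into S1 (f (fst p (-1))) (snd p))"

definition Wu_loc :: "(int \<Rightarrow> nat) \<Rightarrow> (int \<Rightarrow> nat) set" where
  "Wu_loc \<omega> = {\<omega>' \<in> Sigma2. \<forall>i<0. \<omega>' i = \<omega> i}"

definition Wuu :: "(nat \<Rightarrow> complex \<Rightarrow> complex) \<Rightarrow> (int \<Rightarrow> nat) \<Rightarrow> complex \<Rightarrow> ((int \<Rightarrow> nat) \<times> complex) set" where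
  "Wuu f \<omega> x = (\<Union>n::nat. (skew f ^^ n) `
      (Wu_loc ((shift_inv ^^ n) \<omega>) \<times> {snd ((skew_inv f ^^ n) (\<omega>, x))}))"

definition dense_in_prod :: "real \<Rightarrow> ((int \<Rightarrow> nat) \<times> complex) set \<Rightarrow> bool" where
  "dense_in_prod \<nu> L \<longleftrightarrow>
     (\<forall>\<eta>\<in>Sigma2. \<forall>y\<in>S1. \<forall>e>0. \<exists>(\<eta>', y')\<in>L. sigma_dist \<nu> \<eta> \<eta>' < e \<and> dist y y' < e)"

definition uu_minimal :: "real \<Rightarrow> (nat \<Rightarrow> complex \<Rightarrow> complex) \<Rightarrow> bool" where
  "uu_minimal \<nu> f \<longleftrightarrow> (\<forall>\<omega>\<in>Sigma2. \<forall>x\<in>S1. dense_in_prod \<nu> (Wuu f \<omega> x))"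

definition rot_family :: "real \<Rightarrow> real \<Rightarrow> nat \<Rightarrow> complex \<Rightarrow> complex" where
  "rot_family a b k = (if k = 1 then circ_rot a else circ_rot b)"

end

theory Submission
  imports Defs
begin

text \<open>Choose Q > 0 with Q\<beta> - Q\<alpha> \<in> \<int>. Then z \<mapsto> z^Q semiconjugates both rotations to
  one and the same rotation z \<mapsto> c z, so the Q-th power of a point is determined by the
  number of maps applied to it, whatever the choice of the maps. Points whose Q-th powers are
  antipodal are at distance at least 2/Q; hence neither the images F^n{1} nor the strong
  unstable leaf through (\<omega>, 1) come closer than 2/Q to suitable points of the circle.
  Minimality needs only one irrational rotation, whose orbits are dense by Kronecker's theorem.\<close>

lemma norm_cis_minus_1_le: "norm (cis d - 1) \<le> \<bar>d\<bar>"
  using dist_exp_i_1[of d] abs_sin_x_le_abs_x[of "d/2"] by (simp add: cis_conv_exp)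

lemma dist_cis_le: "dist (cis a) (cis b) \<le> \<bar>a - b\<bar>"
proof -
  have "cis a - cis b = cis b * (cis (a - b) - 1)"
    by (simp add: right_diff_distrib cis_mult)
  then show ?thesis
    using norm_cis_minus_1_le[of "a - b"] by (simp add: dist_norm norm_mult)
qed

lemma cis_Arg_of_norm_1:
  assumes "norm w = 1"
  shows "cis (Arg w) = w"
proof -
  have "w \<noteq> 0" using assms by auto
  then show ?thesis using assms by (simp add: cis_Arg sgn_div_norm)
qed

lemma circ_rot_power: "(circ_rot t z) ^ n = cis (2 * pi * real n * t) * z ^ n"
  by (simp only: circ_rot_def power_mult_distrib Complex.DeMoivre) (simp add: mult_ac)

lemma funpow_circ_rot: "(circ_rot t ^^ n) z = cis (2 * pi * real n * t) * z"
  by (induction n) (simp_all add: circ_rot_def cis_mult algebra_simps)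

lemma inv_into_circ_rot:
  assumes "w \<in> S1"
  shows "inv_into S1 (circ_rot t) w = circ_rot (- t) w"
proof (rule inv_into_f_eq)
  show "inj_on (circ_rot t) S1"
    by (rule inj_onI) (simp add: circ_rot_def)
  show "circ_rot (- t) w \<in> S1"
    using assms by (simp add: S1_def circ_rot_def norm_mult)
  show "circ_rot t (circ_rot (- t) w) = w"
    by (simp add: circ_rot_def cis_mult mult.assoc[symmetric])
qed

lemma funpow_in_semigrp: "f \<in> F \<Longrightarrow> f ^^ Suc n \<in> semigrp F"
  by (induction n) (auto intro: semigrp.intros)

lemma irrational_rotation_approx:
  assumes "\<alpha> \<notin> \<rat>" and "e > 0"
  obtains n where "dist (cis (2*pi*real (Suc n)*\<alpha>)) (cis \<theta>) < e"
proof -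
  have "e / (2*pi) > 0" using \<open>e > 0\<close> by simp
  then obtain m k :: int where "k > 0" and mk: "\<bar>k * \<alpha> - m - \<theta> / (2*pi)\<bar> < e / (2*pi)"
    using sequence_of_fractional_parts_is_dense[OF assms(1)] by blast
  define n where "n = nat k - 1"
  have kn: "real (Suc n) = of_int k" using \<open>k > 0\<close> by (simp add: n_def)
  have "cis (2*pi*m) = 1"
    by simp
  then have "cis (2*pi*real (Suc n)*\<alpha>) = cis (2*pi*(k*\<alpha> - m))"
    unfolding kn using cis_divide[of "2*pi*(k*\<alpha>)" "2*pi*m"] by (simp add: right_diff_distrib mult.assoc)
  then have "dist (cis (2*pi*real (Suc n)*\<alpha>)) (cis \<theta>) \<le> \<bar>2*pi*(k*\<alpha> - m) - \<theta>\<bar>"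
    using dist_cis_le by simp
  also have "\<dots> = \<bar>2*pi * (k*\<alpha> - m - \<theta> / (2*pi))\<bar>"
    by (simp add: right_diff_distrib)
  also have "\<dots> = 2*pi * \<bar>k*\<alpha> - m - \<theta> / (2*pi)\<bar>"
    by (simp add: abs_mult)
  also have "\<dots> < e"
    using mk by (simp add: field_simps)
  finally show thesis
    using that by blast
qed

lemma ifs_minimal_if_irrational_rotation:
  assumes "\<alpha> \<notin> \<rat>" and "circ_rot \<alpha> \<in> F"
  shows "ifs_minimal F"
  unfolding ifs_minimal_def
proof (intro ballI subsetI)
  fix x y assume "x \<in> S1" "y \<in> S1"
  then have nx: "norm x = 1" and ny: "norm y = 1" by (auto simp: S1_def)
  define \<theta> where "\<theta> = Arg (y / x)"
  have y: "y = cis \<theta> * x"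
    using cis_Arg_of_norm_1[of "y / x"] nx ny by (auto simp: \<theta>_def norm_divide)
  show "y \<in> closure {h x |h. h \<in> semigrp F}"
    unfolding closure_approachable
  proof (intro allI impI)
    fix e :: real assume "e > 0"
    then obtain n where n: "dist (cis (2*pi*real (Suc n)*\<alpha>)) (cis \<theta>) < e"
      using irrational_rotation_approx[OF assms(1)] by blast
    have "dist ((circ_rot \<alpha> ^^ Suc n) x) y = dist (cis (2*pi*real (Suc n)*\<alpha>)) (cis \<theta>)"
      unfolding funpow_circ_rot y dist_norm by (simp add: nx norm_mult flip: left_diff_distrib)
    with n have "dist ((circ_rot \<alpha> ^^ Suc n) x) y < e"
      by linarith
    then show "\<exists>z\<in>{h x |h. h \<in> semigrp F}. dist z y < e"
      using funpow_in_semigrp[OF assms(2), of n] by blast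
  qed
qed

lemma common_power_of_rotations:
  assumes "\<beta> - \<alpha> \<in> \<rat>"
  obtains Q :: nat where "Q > 0" and "cis (2*pi*real Q*\<alpha>) = cis (2*pi*real Q*\<beta>)"
proof -
  obtain a b :: int where "b > 0" and ab: "\<beta> - \<alpha> = a / b"
    using Rats_cases'[OF assms] by metis
  have "real (nat b)*\<beta> = real (nat b)*\<alpha> + a"
    using ab \<open>b > 0\<close> by (simp add: field_simps)
  then have "2*pi*real (nat b)*\<beta> = 2*pi*real (nat b)*\<alpha> + 2*pi*a"
    by (simp only: mult.assoc distrib_left)
  then have "cis (2*pi*real (nat b)*\<beta>) = cis (2*pi*real (nat b)*\<alpha>)"
    by (simp add: cis_mult[symmetric])
  with \<open>b > 0\<close> show thesis
    using that[of "nat b"] by simp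
qed

lemma opposite_root_in_S1:
  assumes "Q > 0" and "norm w = 1"
  obtains b where "b \<in> S1" and "b ^ Q = - w"
proof
  show "cis ((Arg w + pi) / real Q) \<in> S1"
    by (simp add: S1_def)
  show "cis ((Arg w + pi) / real Q) ^ Q = - w"
    using assms by (simp add: Complex.DeMoivre cis_Arg_of_norm_1 flip: minus_cis)
qed

lemma dist_ge_if_powers_opposite:
  fixes a b :: complex
  assumes "Q > 0" and "a ^ Q = w" and "b ^ Q = - w" and "norm w = 1"
  shows "2 / real Q \<le> dist b a"
proof -
  have "norm a ^ Q = 1" "norm b ^ Q = 1"
    using assms by (simp_all flip: norm_power)
  then have "norm a = 1" "norm b = 1"
    using \<open>Q > 0\<close> by (metis norm_ge_zero power_eq_imp_eq_base zero_le_one power_one)+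
  then have "norm (b ^ Q - a ^ Q) \<le> real Q * norm (b - a)"
    by (intro norm_power_diff) auto
  moreover have "norm (b ^ Q - a ^ Q) = 2"
    using assms by (simp add: norm_minus_commute)
  ultimately show ?thesis
    using \<open>Q > 0\<close> by (simp add: dist_norm field_simps)
qed

lemma infdist_le_hausdorff_dist:
  assumes "b \<in> B" and "A \<noteq> {}" and "bounded B"
  shows "infdist b A \<le> hausdorff_dist A B"
proof -
  obtain a where "a \<in> A" using assms(2) by blast
  obtain r where r: "\<And>x. x \<in> B \<Longrightarrow> dist a x \<le> r"
    using assms(3) bounded_any_center by metis
  have "infdist x A \<le> r" if "x \<in> B" for x
    using infdist_le[OF \<open>a \<in> A\<close>, of x] r[OF that] by (simp add: dist_commute)
  then have "bdd_above ((\<lambda>x. infdist x A) ` B)"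
    by (rule bdd_aboveI2)
  then have "infdist b A \<le> (SUP x\<in>B. infdist x A)"
    using assms(1) by (rule cSUP_upper2) simp
  then show ?thesis
    by (simp add: hausdorff_dist_def)
qed

lemma not_strict_attractor_if_power_semiconjugate:
  assumes "Q > 0" and "norm c = 1" and "F \<noteq> {}"
    and power: "\<And>f z. f \<in> F \<Longrightarrow> (f z) ^ Q = c * z ^ Q"
  shows "\<not> strict_attractor F"
proof
  define A where "A n = (Fimg F ^^ n) {1}" for n
  have A_power: "z ^ Q = c ^ n" if "z \<in> A n" for z n
    using that by (induction n arbitrary: z) (auto simp: A_def Fimg_def power)
  have A_nonempty: "A n \<noteq> {}" for n
    using \<open>F \<noteq> {}\<close> by (induction n) (auto simp: A_def Fimg_def)
  have far: "2 / real Q \<le> hausdorff_dist (A n) S1" for n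
  proof -
    obtain b where "b \<in> S1" and b: "b ^ Q = - (c ^ n)"
      using opposite_root_in_S1[OF \<open>Q > 0\<close>, of "c ^ n"] \<open>norm c = 1\<close> by (auto simp: norm_power)
    have "2 / real Q \<le> infdist b (A n)"
      unfolding infdist_notempty[OF A_nonempty]
      using dist_ge_if_powers_opposite[OF \<open>Q > 0\<close> A_power b] \<open>norm c = 1\<close>
      by (intro cINF_greatest A_nonempty) (simp add: norm_power)
    also have "\<dots> \<le> hausdorff_dist (A n) S1"
      using \<open>b \<in> S1\<close> A_nonempty by (rule infdist_le_hausdorff_dist) (simp add: S1_def)
    finally show ?thesis .
  qed
  assume "strict_attractor F"
  then have "(\<lambda>n. hausdorff_dist (A n) S1) \<longlonglongrightarrow> 0"
    by (auto simp: strict_attractor_def A_def S1_def)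
  then have "2 / real Q \<le> 0"
    using far by (intro LIMSEQ_le_const) auto
  with \<open>Q > 0\<close> show False by simp
qed

context
  fixes Q :: nat and c :: complex and f :: "nat \<Rightarrow> complex \<Rightarrow> complex"
  assumes rotations: "\<And>k. \<exists>t. f k = circ_rot t \<and> cis (2*pi*real Q*t) = c"
begin

lemma skew_funpow_power: "snd ((skew f ^^ n) p) ^ Q = c ^ n * snd p ^ Q"
proof (induction n)
  case (Suc n)
  obtain t where "f (fst ((skew f ^^ n) p) 0) = circ_rot t" "cis (2*pi*real Q*t) = c"
    using rotations by blast
  with Suc show ?case
    by (simp add: skew_def[of f "(skew f ^^ n) p"] circ_rot_power)
qed simp

lemma skew_inv_power:
  assumes "snd p \<in> S1"
  shows "snd (skew_inv f p) \<in> S1 \<and> c * snd (skew_inv f p) ^ Q = snd p ^ Q"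
proof -
  obtain t where t: "f (fst p (-1)) = circ_rot t" and c: "cis (2*pi*real Q*t) = c"
    using rotations by blast
  have "c * cis (2*pi*real Q*(-t)) = 1"
    by (simp add: c[symmetric] cis_mult)
  then have "c * circ_rot (- t) (snd p) ^ Q = snd p ^ Q"
    by (simp add: circ_rot_power mult.assoc[symmetric])
  moreover have "circ_rot (- t) (snd p) \<in> S1"
    using assms by (simp add: S1_def circ_rot_def norm_mult)
  ultimately show ?thesis
    using assms by (simp add: skew_inv_def t inv_into_circ_rot)
qed

lemma skew_inv_funpow_power:
  assumes "snd p \<in> S1"
  shows "snd ((skew_inv f ^^ n) p) \<in> S1 \<and> c ^ n * snd ((skew_inv f ^^ n) p) ^ Q = snd p ^ Q"
proof (induction n)
  case (Suc n)
  let ?q = "(skew_inv f ^^ n) p"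
  have "c ^ Suc n * snd (skew_inv f ?q) ^ Q = c ^ n * (c * snd (skew_inv f ?q) ^ Q)"
    by (simp add: mult_ac)
  then show ?case
    using Suc skew_inv_power[of ?q] by simp
qed (use assms in simp)

lemma Wuu_power_eq:
  assumes "(\<eta>, y) \<in> Wuu f \<omega> x" and "x \<in> S1"
  shows "y ^ Q = x ^ Q"
proof -
  obtain n \<omega>' where "(\<eta>, y) = (skew f ^^ n) (\<omega>', snd ((skew_inv f ^^ n) (\<omega>, x)))"
    using assms(1) unfolding Wuu_def by auto
  then have "y ^ Q = c ^ n * snd ((skew_inv f ^^ n) (\<omega>, x)) ^ Q"
    by (metis skew_funpow_power snd_conv)
  also have "\<dots> = x ^ Q"
    using skew_inv_funpow_power[of "(\<omega>, x)" n] assms(2) by simp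
  finally show ?thesis .
qed

lemma not_uu_minimal_if_power_semiconjugate:
  assumes "Q > 0"
  shows "\<not> uu_minimal \<nu> f"
proof
  define \<omega> :: "int \<Rightarrow> nat" where "\<omega> = (\<lambda>_. 1)"
  have "\<omega> \<in> Sigma2" and "1 \<in> S1"
    by (simp_all add: \<omega>_def Sigma2_def S1_def)
  obtain y0 where "y0 \<in> S1" and y0: "y0 ^ Q = - 1"
    using opposite_root_in_S1[OF assms, of 1] by auto
  assume "uu_minimal \<nu> f"
  then have "dense_in_prod \<nu> (Wuu f \<omega> 1)"
    using \<open>\<omega> \<in> Sigma2\<close> \<open>1 \<in> S1\<close> by (simp add: uu_minimal_def)
  moreover have "2 / real Q > 0"
    using assms by simp
  ultimately have "\<exists>(\<eta>, y) \<in> Wuu f \<omega> 1. sigma_dist \<nu> \<omega> \<eta> < 2 / real Q \<and> dist y0 y < 2 / real Q"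
    using \<open>\<omega> \<in> Sigma2\<close> \<open>y0 \<in> S1\<close> unfolding dense_in_prod_def by blast
  then obtain \<eta> y where "(\<eta>, y) \<in> Wuu f \<omega> 1" and "dist y0 y < 2 / real Q"
    by blast
  moreover from this(1) have "y ^ Q = 1"
    using Wuu_power_eq[OF _ \<open>1 \<in> S1\<close>] by simp
  ultimately show False
    using dist_ge_if_powers_opposite[OF assms _ y0, of y] by simp
qed

end

theorem mainTheorem19:
  fixes \<alpha> \<beta> \<nu> :: real
  assumes "\<alpha> \<notin> \<rat>" and "\<beta> \<notin> \<rat>" and "\<beta> - \<alpha> \<in> \<rat>"
    and "0 < \<nu>" and "\<nu> < 1"
  shows "ifs_minimal {circ_rot \<alpha>, circ_rot \<beta>}
    \<and> \<not> strict_attractor {circ_rot \<alpha>, circ_rot \<beta>}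
    \<and> \<not> uu_minimal \<nu> (rot_family \<alpha> \<beta>)"
proof -
  obtain Q where "Q > 0" and common: "cis (2*pi*real Q*\<alpha>) = cis (2*pi*real Q*\<beta>)"
    using common_power_of_rotations[OF assms(3)] .
  define c where "c = cis (2*pi*real Q*\<beta>)"
  have "(f z) ^ Q = c * z ^ Q" if "f \<in> {circ_rot \<alpha>, circ_rot \<beta>}" for f z
    using that common by (auto simp: c_def circ_rot_power)
  then have "\<not> strict_attractor {circ_rot \<alpha>, circ_rot \<beta>}"
    using \<open>Q > 0\<close> by (intro not_strict_attractor_if_power_semiconjugate) (auto simp: c_def)
  moreover have "\<exists>t. rot_family \<alpha> \<beta> k = circ_rot t \<and> cis (2*pi*real Q*t) = c" for k
    using common by (auto simp: rot_family_def c_def)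
  then have "\<not> uu_minimal \<nu> (rot_family \<alpha> \<beta>)"
    using not_uu_minimal_if_power_semiconjugate \<open>Q > 0\<close> by blast
  ultimately show ?thesis
    using ifs_minimal_if_irrational_rotation[OF assms(1)] by blast
qed

end
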